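(* (Curry-Feys Standardization) For all terms $e, e'$: $e \to\!\!\to e'$ if and only if there exists a standard reduction sequence $e_1, \dots, e_n \in \mathcal{R}$ with $e = e_1$ and $e' = e_n$.
   Context: Terms: $e ::= x \mid \lambda x.e \mid e\,e$ (modulo $\alpha$-equivalence, Barendregt's variable convention). Values: $v ::= \lambda x.e$. A context is a term with one hole $[\,]$; $C[e]$ is plugging, $C_1[C_2]$ composition. Answer contexts: $A ::= [\,] \mid A[\lambda x.A]\,e$. Outer partial answer contexts: $A^{\uparrow} ::= [\,] \mid A[A^{\uparrow}]\,e$. Inner partial answer contexts: $A^{\downarrow} ::= [\,] \mid A[\lambda x.A^{\downarrow}]$. Evaluation contexts: $E ::= [\,] \mid E\,e \mid A[E] \mid A^{\uparrow}[A[\lambda x.A^{\downarrow}[E[x]]]\,E]$, where in the last production $A^{\uparrow}[A^{\downarrow}]$ must be an answer context. Axiom $\beta_{need}$: $A^{\uparrow}[A_1[\lambda x.A^{\downarrow}[E[x]]]\,A_2[v]] \;\beta_{need}\; A^{\uparrow}[A_1[A_2[(A^{\downarrow}[E[x]])\{x:=v\}]]]$ provided $A^{\uparrow}[A^{\downarrow}]$ is an answer context ($\{x:=v\}$ capture-avoiding substitution). $\to$ is the compatible closure of $\beta_{need}$ (closure under contexts $C ::= [\,] \mid \lambda x.C \mid C\,e \mid e\,C$), $\to\!\!\to$ its reflexive–transitive closure. Standard reduction: $E[e]\mapsto E[e']$ for every evaluation context $E$ whenever $e\;\beta_{need}\;e'$. The set $\mathcal{R}$ of standard reduction sequences is the least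 set of finite nonempty sequences of terms such that: (1) for every variable $x$, the one-element sequence $x$ is in $\mathcal{R}$; (2) if $e_1,\dots,e_m\in\mathcal{R}$ then $\lambda x.e_1,\dots,\lambda x.e_m\in\mathcal{R}$; (3) if $e_0\mapsto e_1$ and $e_1,\dots,e_m\in\mathcal{R}$ then $e_0,e_1,\dots,e_m\in\mathcal{R}$; (4) if $e_1,\dots,e_m\in\mathcal{R}$ and $e_1',\dots,e_n'\in\mathcal{R}$ then $(e_1\,e_1'),\dots,(e_m\,e_1'),(e_m\,e_2'),\dots,(e_m\,e_n')\in\mathcal{R}$. *)

theory Defs
  imports Main
begin

text \<open>Lambda terms modulo alpha-equivalence, represented with de Bruijn indices.
  A variable occurrence Var i refers to the i-th enclosing binder (counted from 0);
  indices exceeding the number of enclosing binders denote free variables.\<close>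

datatype dB = Var nat | Lam dB | App dB dB

primrec liftn :: "nat \<Rightarrow> dB \<Rightarrow> nat \<Rightarrow> dB" where
  "liftn n (Var i) k = (if i < k then Var i else Var (i + n))"
| "liftn n (Lam t) k = Lam (liftn n t (k + 1))"
| "liftn n (App s t) k = App (liftn n s k) (liftn n t k)"

primrec subst :: "dB \<Rightarrow> dB \<Rightarrow> nat \<Rightarrow> dB" where
  "subst (Var i) s k = (if k < i then Var (i - 1) else if i = k then s else Var i)"
| "subst (Lam t) s k = Lam (subst t (liftn 1 s 0) (k + 1))"
| "subst (App t u) s k = App (subst t s k) (subst u s k)"

definition is_value :: "dB \<Rightarrow> bool" where
  "is_value t \<longleftrightarrow> (\<exists>b. t = Lam b)"

text \<open>One-hole contexts; plugging is literal (may capture).\<close>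
datatype ctx = Hole | CLam ctx | CAppL ctx dB | CAppR dB ctx

primrec plug :: "ctx \<Rightarrow> dB \<Rightarrow> dB" where
  "plug Hole e = e"
| "plug (CLam C) e = Lam (plug C e)"
| "plug (CAppL C t) e = App (plug C e) t"
| "plug (CAppR t C) e = App t (plug C e)"

primrec comp :: "ctx \<Rightarrow> ctx \<Rightarrow> ctx" where
  "comp Hole D = D"
| "comp (CLam C) D = CLam (comp C D)"
| "comp (CAppL C t) D = CAppL (comp C D) t"
| "comp (CAppR t C) D = CAppR t (comp C D)"

primrec binders :: "ctx \<Rightarrow> nat" where
  "binders Hole = 0"
| "binders (CLam C) = Suc (binders C)"
| "binders (CAppL C t) = binders C"
| "binders (CAppR t C) = binders C"

primrec cliftn :: "nat \<Rightarrow> ctx \<Rightarrow> nat \<Rightarrow> ctx" where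
  "cliftn n Hole k = Hole"
| "cliftn n (CLam C) k = CLam (cliftn n C (k + 1))"
| "cliftn n (CAppL C t) k = CAppL (cliftn n C k) (liftn n t k)"
| "cliftn n (CAppR t C) k = CAppR (liftn n t k) (cliftn n C k)"

inductive ans :: "ctx \<Rightarrow> bool" where
  ans_hole: "ans Hole"
| ans_app: "ans A1 \<Longrightarrow> ans A2 \<Longrightarrow> ans (CAppL (comp A1 (CLam A2)) e)"

inductive outer :: "ctx \<Rightarrow> bool" where
  outer_hole: "outer Hole"
| outer_app: "ans A \<Longrightarrow> outer Au \<Longrightarrow> outer (CAppL (comp A Au) e)"

inductive inner :: "ctx \<Rightarrow> bool" where
  inner_hole: "inner Hole"
| inner_lam: "ans A \<Longrightarrow> inner Ad \<Longrightarrow> inner (comp A (CLam Ad))"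

text \<open>The term A1[\<lambda>x. Ad[E[x]]] where x is the variable bound by the displayed \<lambda>
  (in de Bruijn form: index binders Ad + binders E at the hole of E).\<close>
definition need_body :: "ctx \<Rightarrow> ctx \<Rightarrow> dB" where
  "need_body Ad E = plug Ad (plug E (Var (binders Ad + binders E)))"

inductive eval_ctx :: "ctx \<Rightarrow> bool" where
  ev_hole: "eval_ctx Hole"
| ev_app: "eval_ctx E \<Longrightarrow> eval_ctx (CAppL E e)"
| ev_ans: "ans A \<Longrightarrow> eval_ctx E \<Longrightarrow> eval_ctx (comp A E)"
| ev_need: "outer Au \<Longrightarrow> ans A \<Longrightarrow> inner Ad \<Longrightarrow> eval_ctx E1 \<Longrightarrow> eval_ctx E2 \<Longrightarrow>
     ans (comp Au Ad) \<Longrightarrow>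
     eval_ctx (comp Au (CAppR (plug A (Lam (need_body Ad E1))) E2))"

text \<open>Axiom beta_need:
  Au[A1[\<lambda>x.Ad[E[x]]] A2[v]]  beta_need  Au[A1[A2[(Ad[E[x]]){x:=v}]]]
  provided Au[Ad] is an answer context.  In de Bruijn form, moving A2[v] under the
  binders of A1 requires lifting A2 and v by binders A1, and the body
  Ad[E[x]] must be lifted over the binders of A2 before x is substituted.\<close>
inductive beta_need :: "dB \<Rightarrow> dB \<Rightarrow> bool" where
  beta_needI: "outer Au \<Longrightarrow> ans A1 \<Longrightarrow> inner Ad \<Longrightarrow> eval_ctx E \<Longrightarrow> ans A2 \<Longrightarrow>
     ans (comp Au Ad) \<Longrightarrow> is_value v \<Longrightarrow>
     beta_need
       (plug Au (App (plug A1 (Lam (need_body Ad E))) (plug A2 v)))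
       (plug Au (plug A1 (plug (cliftn (binders A1) A2 0)
          (subst (liftn (binders A2) (need_body Ad E) 1)
                 (liftn (binders A1) v (binders A2)) 0))))"

inductive red :: "dB \<Rightarrow> dB \<Rightarrow> bool" where
  red_beta: "beta_need e e' \<Longrightarrow> red e e'"
| red_lam: "red e e' \<Longrightarrow> red (Lam e) (Lam e')"
| red_appL: "red e e' \<Longrightarrow> red (App e u) (App e' u)"
| red_appR: "red e e' \<Longrightarrow> red (App u e) (App u e')"

abbreviation red_star :: "dB \<Rightarrow> dB \<Rightarrow> bool" where
  "red_star \<equiv> red\<^sup>*\<^sup>*"

inductive std_step :: "dB \<Rightarrow> dB \<Rightarrow> bool" where
  std_stepI: "eval_ctx E \<Longrightarrow> beta_need e e' \<Longrightarrow> std_step (plug E e) (plug E e')"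

inductive_set std_seqs :: "dB list set" where
  sr_var: "[Var x] \<in> std_seqs"
| sr_lam: "es \<in> std_seqs \<Longrightarrow> map Lam es \<in> std_seqs"
| sr_step: "std_step e0 (hd es) \<Longrightarrow> es \<in> std_seqs \<Longrightarrow> e0 # es \<in> std_seqs"
| sr_app: "es \<in> std_seqs \<Longrightarrow> fs \<in> std_seqs \<Longrightarrow>
     map (\<lambda>e. App e (hd fs)) es @ map (App (last es)) (tl fs) \<in> std_seqs"

end

theory Submission
  imports Defs
begin

text \<open>Let tred e e' mean that e reaches e' by beta_need steps at the root interleaved with
  descending into subterms. Every reduction step is a tred step, and tred is stable under lifting
  and substitution. The key fact is that a tred step followed by a standard step can be replaced
  by standard steps followed by a tred step. To see this one pulls the evaluation context and the
  redex of the standard step back along tred; for a beta_need redex the variable demanded by the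
  body of the abstraction has to be brought into evaluation position as well, which answer
  contexts make possible. Consequently tred followed by a standard sequence is standard, and a
  reduction sequence is standardized by induction on its length. Conversely, standard steps are
  reduction steps.\<close>

lemma liftn_0 [simp]: "liftn 0 t k = t"
  by (induction t arbitrary: k) auto

lemma liftn_liftn_add:
  "i \<le> j \<Longrightarrow> j \<le> i + m \<Longrightarrow> liftn n (liftn m t i) j = liftn (m + n) t i"
  by (induction t arbitrary: i j) auto

lemma liftn_liftn_0: "liftn n (liftn m t 0) 0 = liftn (m + n) t 0"
  by (rule liftn_liftn_add) auto

lemma liftn_liftn_comm:
  "i \<le> j \<Longrightarrow> liftn n (liftn m t i) (j + m) = liftn m (liftn n t j) i"
proof (induction t arbitrary: i j)
  case (Lam t)
  then show ?case using Lam.IH[of "Suc i" "Suc j"] by simp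
qed auto

lemma liftn_subst:
  "j \<le> i \<Longrightarrow> liftn n (subst t s j) i = subst (liftn n t (i + 1)) (liftn n s i) j"
proof (induction t arbitrary: i j s)
  case (Lam t)
  then show ?case
    using liftn_liftn_comm[of 0 i n 1 s] Lam.IH[of "Suc j" "Suc i" "liftn 1 s 0"] by simp
qed auto

lemma subst_liftn:
  "i \<le> j \<Longrightarrow> subst (liftn n t i) (liftn n s i) (j + n) = liftn n (subst t s j) i"
proof (induction t arbitrary: i j s)
  case (Lam t)
  then show ?case
    using liftn_liftn_comm[of 0 i n 1 s] Lam.IH[of "Suc i" "Suc j" "liftn 1 s 0"] by simp
qed auto

lemma subst_liftn_Suc_0 [simp]: "subst (liftn (Suc 0) t k) s k = t"
  by (induction t arbitrary: k s) auto

lemma subst_subst: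
  "i \<le> j \<Longrightarrow> subst (subst t u i) v j = subst (subst t (liftn 1 v i) (j + 1)) (subst u v j) i"
proof (induction t arbitrary: i j u v)
  case (Lam t)
  have "subst (liftn 1 u 0) (liftn 1 v 0) (Suc j) = liftn 1 (subst u v j) 0"
    using subst_liftn[of 0 j 1 u v] by simp
  moreover have "liftn 1 (liftn 1 v i) 0 = liftn 1 (liftn 1 v 0) (Suc i)"
    using liftn_liftn_comm[of 0 i 1 1 v] by simp
  ultimately show ?case using Lam by simp
qed auto

text \<open>The body b and the argument v of a beta_need contraction, under a2 and a1 extra binders
  respectively, commute with lifting and substitution below binder K.\<close>

lemma liftn_contractum:
  "liftn n (subst (liftn a2 b 1) (liftn a1 v a2) 0) (K + a1 + a2) =
   subst (liftn a2 (liftn n b (K + a1 + 1)) 1) (liftn a1 (liftn n v (K + a2)) a2) 0"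
proof -
  have "liftn n (liftn a2 b 1) (K + a1 + a2 + 1) = liftn a2 (liftn n b (K + a1 + 1)) 1"
    using liftn_liftn_comm[of 1 "K + a1 + 1" n a2 b] by (simp add: ac_simps)
  moreover have "liftn n (liftn a1 v a2) (K + a1 + a2) = liftn a1 (liftn n v (K + a2)) a2"
    using liftn_liftn_comm[of a2 "K + a2" n a1 v] by (simp add: ac_simps)
  ultimately show ?thesis by (simp add: liftn_subst)
qed

lemma subst_contractum:
  "subst (subst (liftn a2 b 1) (liftn a1 v a2) 0) (liftn (a1 + a2) s 0) (K + a1 + a2) =
   subst (liftn a2 (subst b (liftn (a1 + 1) s 0) (K + a1 + 1)) 1)
     (liftn a1 (subst v (liftn a2 s 0) (K + a2)) a2) 0"
proof -
  have "liftn 1 (liftn (a1 + a2) s 0) 0 = liftn a2 (liftn (a1 + 1) s 0) 1"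
    by (simp add: liftn_liftn_0 liftn_liftn_add ac_simps)
  moreover have "subst (liftn a2 b 1) (liftn a2 (liftn (a1 + 1) s 0) 1) (K + a1 + a2 + 1) =
      liftn a2 (subst b (liftn (a1 + 1) s 0) (K + a1 + 1)) 1"
    using subst_liftn[of 1 "K + a1 + 1" a2 b] by (simp add: ac_simps)
  moreover have "liftn (a1 + a2) s 0 = liftn a1 (liftn a2 s 0) a2"
    by (simp add: liftn_liftn_add ac_simps)
  moreover have "subst (liftn a1 v a2) (liftn a1 (liftn a2 s 0) a2) (K + a1 + a2) =
      liftn a1 (subst v (liftn a2 s 0) (K + a2)) a2"
    using subst_liftn[of a2 "K + a2" a1 v "liftn a2 s 0"] by (simp add: ac_simps)
  ultimately show ?thesis by (simp add: subst_subst)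
qed

lemma plug_comp [simp]: "plug (comp C D) t = plug C (plug D t)"
  by (induction C) auto

lemma comp_Hole [simp]: "comp C Hole = C"
  by (induction C) auto

lemma comp_assoc [simp]: "comp (comp C D) F = comp C (comp D F)"
  by (induction C) auto

lemma binders_cliftn [simp]: "binders (cliftn n C k) = binders C"
  by (induction C arbitrary: k) auto

lemma cliftn_comp:
  "cliftn n (comp C D) k = comp (cliftn n C k) (cliftn n D (k + binders C))"
  by (induction C arbitrary: k) auto

lemma liftn_plug: "liftn n (plug C t) k = plug (cliftn n C k) (liftn n t (k + binders C))"
  by (induction C arbitrary: k) auto

lemma cliftn_cliftn_comm:
  "i \<le> j \<Longrightarrow> cliftn n (cliftn m C i) (j + m) = cliftn m (cliftn n C j) i"
proof (induction C arbitrary: i j)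
  case (CLam C)
  then show ?case using CLam.IH[of "Suc i" "Suc j"] by simp
qed (auto simp: liftn_liftn_comm)

primrec csubst :: "ctx \<Rightarrow> dB \<Rightarrow> nat \<Rightarrow> ctx" where
  "csubst Hole s k = Hole"
| "csubst (CLam C) s k = CLam (csubst C (liftn 1 s 0) (k + 1))"
| "csubst (CAppL C t) s k = CAppL (csubst C s k) (subst t s k)"
| "csubst (CAppR t C) s k = CAppR (subst t s k) (csubst C s k)"

lemma binders_csubst [simp]: "binders (csubst C s k) = binders C"
  by (induction C arbitrary: k s) auto

lemma csubst_comp:
  "csubst (comp C D) s k =
   comp (csubst C s k) (csubst D (liftn (binders C) s 0) (k + binders C))"
  by (induction C arbitrary: k s) (auto simp: liftn_liftn_0)

lemma subst_plug:
  "subst (plug C t) s k = plug (csubst C s k) (subst t (liftn (binders C) s 0) (k + binders C))"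
  by (induction C arbitrary: k s) (auto simp: liftn_liftn_0)

lemma csubst_cliftn:
  "i \<le> j \<Longrightarrow> csubst (cliftn n C i) (liftn n s i) (j + n) = cliftn n (csubst C s j) i"
proof (induction C arbitrary: i j s)
  case (CLam C)
  then show ?case
    using liftn_liftn_comm[of 0 i n 1 s] CLam.IH[of "Suc i" "Suc j" "liftn 1 s 0"] by simp
qed (auto simp: subst_liftn)

lemma liftn_need_body:
  "0 < k \<Longrightarrow> liftn n (need_body Ad E) k =
     need_body (cliftn n Ad k) (cliftn n E (k + binders Ad))"
  by (simp add: need_body_def liftn_plug add.assoc)

lemma subst_need_body:
  "0 < k \<Longrightarrow> subst (need_body Ad E) s k =
     need_body (csubst Ad s k) (csubst E (liftn (binders Ad) s 0) (k + binders Ad))"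
  by (simp add: need_body_def subst_plug add.assoc)

inductive ctx_rel :: "(dB \<Rightarrow> dB \<Rightarrow> bool) \<Rightarrow> ctx \<Rightarrow> ctx \<Rightarrow> bool" for R where
  ctx_rel_Hole: "ctx_rel R Hole Hole"
| ctx_rel_CLam: "ctx_rel R C D \<Longrightarrow> ctx_rel R (CLam C) (CLam D)"
| ctx_rel_CAppL: "ctx_rel R C D \<Longrightarrow> R t u \<Longrightarrow> ctx_rel R (CAppL C t) (CAppL D u)"
| ctx_rel_CAppR: "R t u \<Longrightarrow> ctx_rel R C D \<Longrightarrow> ctx_rel R (CAppR t C) (CAppR u D)"

abbreviation same_shape :: "ctx \<Rightarrow> ctx \<Rightarrow> bool" where
  "same_shape \<equiv> ctx_rel (\<lambda>_ _. True)"

inductive_cases ctx_rel_HoleE: "ctx_rel R X Hole"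
inductive_cases ctx_rel_CLamE: "ctx_rel R X (CLam D)"
inductive_cases ctx_rel_CAppLE: "ctx_rel R X (CAppL D u)"
inductive_cases ctx_rel_CAppRE: "ctx_rel R X (CAppR u D)"

lemmas ctx_rel_elims = ctx_rel_HoleE ctx_rel_CLamE ctx_rel_CAppLE ctx_rel_CAppRE

lemma ctx_rel_binders: "ctx_rel R C D \<Longrightarrow> binders C = binders D"
  by (induction rule: ctx_rel.induct) auto

lemma ctx_rel_comp: "ctx_rel R C D \<Longrightarrow> ctx_rel R C' D' \<Longrightarrow> ctx_rel R (comp C C') (comp D D')"
  by (induction rule: ctx_rel.induct) (auto intro: ctx_rel.intros)

lemma ctx_rel_compE:
  assumes "ctx_rel R X (comp A B)"
  obtains A' B' where "X = comp A' B'" "ctx_rel R A' A" "ctx_rel R B' B"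
proof -
  have "\<exists>A' B'. X = comp A' B' \<and> ctx_rel R A' A \<and> ctx_rel R B' B"
    using assms
  proof (induction A arbitrary: X)
    case Hole
    then show ?case by (intro exI[of _ Hole] exI[of _ X]) (auto intro: ctx_rel.intros)
  next
    case (CLam A)
    then obtain X' where "X = CLam X'" "ctx_rel R X' (comp A B)" by (auto elim: ctx_rel_CLamE)
    with CLam.IH show ?case by (metis comp.simps(2) ctx_rel_CLam)
  next
    case (CAppL A t)
    then obtain X' t' where "X = CAppL X' t'" "ctx_rel R X' (comp A B)" "R t' t"
      by (auto elim: ctx_rel_CAppLE)
    with CAppL.IH show ?case by (metis comp.simps(3) ctx_rel_CAppL)
  next
    case (CAppR t A)
    then obtain X' t' where "X = CAppR t' X'" "ctx_rel R X' (comp A B)" "R t' t"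
      by (auto elim: ctx_rel_CAppRE)
    with CAppR.IH show ?case by (metis comp.simps(4) ctx_rel_CAppR)
  qed
  then show ?thesis using that by blast
qed

lemma ctx_rel_same_shape: "ctx_rel R C D \<Longrightarrow> same_shape C D"
  by (induction rule: ctx_rel.induct) (auto intro: ctx_rel.intros)

lemma same_shape_cliftn: "same_shape (cliftn n C k) C"
  by (induction C arbitrary: k) (auto intro: ctx_rel.intros)

lemma same_shape_csubst: "same_shape (csubst C s k) C"
  by (induction C arbitrary: k s) (auto intro: ctx_rel.intros)

text \<open>Answer, outer and inner contexts are characterised by their shape alone: the side
  terms of the applications in them are arbitrary.\<close>

lemma ans_same_shape: "ans A \<Longrightarrow> same_shape X A \<Longrightarrow> ans X"
proof (induction arbitrary: X rule: ans.induct)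
  case ans_hole
  then show ?case by (auto elim: ctx_rel_elims intro: ans.intros)
next
  case (ans_app A1 A2 e)
  then obtain Y t where X: "X = CAppL Y t" and Y: "same_shape Y (comp A1 (CLam A2))"
    by (auto elim: ctx_rel_CAppLE)
  from Y obtain Y1 Y2 where Y12: "Y = comp Y1 Y2" "same_shape Y1 A1" "same_shape Y2 (CLam A2)"
    by (rule ctx_rel_compE)
  from Y12(3) obtain Z where "Y2 = CLam Z" "same_shape Z A2"
    by (auto elim: ctx_rel_CLamE)
  with ans_app.IH X Y12 show ?case by (auto intro: ans.intros)
qed

lemma outer_same_shape: "outer A \<Longrightarrow> same_shape X A \<Longrightarrow> outer X"
proof (induction arbitrary: X rule: outer.induct)
  case outer_hole
  then show ?case by (auto elim: ctx_rel_elims intro: outer.intros)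
next
  case (outer_app A Au e)
  then obtain Y t where X: "X = CAppL Y t" and Y: "same_shape Y (comp A Au)"
    by (auto elim: ctx_rel_CAppLE)
  from Y obtain Y1 Y2 where "Y = comp Y1 Y2" "same_shape Y1 A" "same_shape Y2 Au"
    by (rule ctx_rel_compE)
  with outer_app X show ?case using ans_same_shape by (auto intro: outer.intros)
qed

lemma inner_same_shape: "inner A \<Longrightarrow> same_shape X A \<Longrightarrow> inner X"
proof (induction arbitrary: X rule: inner.induct)
  case inner_hole
  then show ?case by (auto elim: ctx_rel_elims intro: inner.intros)
next
  case (inner_lam A Ad)
  from inner_lam.prems obtain Y1 Y2
    where Y12: "X = comp Y1 Y2" "same_shape Y1 A" "same_shape Y2 (CLam Ad)"
    by (rule ctx_rel_compE)
  from Y12(3) obtain Z where "Y2 = CLam Z" "same_shape Z Ad"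
    by (auto elim: ctx_rel_CLamE)
  with inner_lam Y12 show ?case using ans_same_shape by (auto intro: inner.intros)
qed

definition need_shape :: "ctx \<Rightarrow> ctx \<Rightarrow> ctx \<Rightarrow> bool" where
  "need_shape Au A Ad \<longleftrightarrow> outer Au \<and> ans A \<and> inner Ad \<and> ans (comp Au Ad)"

lemma need_shape_same_shape:
  "need_shape Au A Ad \<Longrightarrow> same_shape Au' Au \<Longrightarrow> same_shape A' A \<Longrightarrow> same_shape Ad' Ad \<Longrightarrow>
   need_shape Au' A' Ad'"
  unfolding need_shape_def
  using ans_same_shape ctx_rel_comp inner_same_shape outer_same_shape by blast

lemma eval_ctx_need:
  "need_shape Au A Ad \<Longrightarrow> eval_ctx E1 \<Longrightarrow> eval_ctx E2 \<Longrightarrow>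
   eval_ctx (comp Au (CAppR (plug A (Lam (need_body Ad E1))) E2))"
  by (simp add: need_shape_def eval_ctx.ev_need)

lemma eval_ctx_cliftn: "eval_ctx E \<Longrightarrow> eval_ctx (cliftn n E k)"
proof (induction arbitrary: k rule: eval_ctx.induct)
  case (ev_ans A E)
  have "ans (cliftn n A k)" using ev_ans.hyps(1) same_shape_cliftn by (rule ans_same_shape)
  with ev_ans.IH show ?case by (simp add: cliftn_comp eval_ctx.ev_ans)
next
  case (ev_need Au A Ad E1 E2)
  let ?K = "k + binders Au"
  have "need_shape Au A Ad" using ev_need.hyps by (simp add: need_shape_def)
  then have "need_shape (cliftn n Au k) (cliftn n A ?K) (cliftn n Ad (?K + binders A + 1))"
    by (rule need_shape_same_shape[OF _ same_shape_cliftn same_shape_cliftn same_shape_cliftn])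
  from eval_ctx_need[OF this ev_need.IH] show ?case
    by (simp add: cliftn_comp liftn_plug liftn_need_body)
qed (auto intro: eval_ctx.intros)

lemma eval_ctx_csubst: "eval_ctx E \<Longrightarrow> eval_ctx (csubst E s k)"
proof (induction arbitrary: k s rule: eval_ctx.induct)
  case (ev_ans A E)
  have "ans (csubst A s k)" using ev_ans.hyps(1) same_shape_csubst by (rule ans_same_shape)
  with ev_ans.IH show ?case by (simp add: csubst_comp eval_ctx.ev_ans)
next
  case (ev_need Au A Ad E1 E2)
  let ?K = "k + binders Au"
  let ?s = "liftn (Suc (binders Au + binders A)) s 0"
  have "need_shape Au A Ad" using ev_need.hyps by (simp add: need_shape_def)
  then have "need_shape (csubst Au s k) (csubst A (liftn (binders Au) s 0) ?K)
      (csubst Ad ?s (?K + binders A + 1))"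
    by (rule need_shape_same_shape[OF _ same_shape_csubst same_shape_csubst same_shape_csubst])
  from eval_ctx_need[OF this ev_need.IH] show ?case
    by (simp add: csubst_comp subst_plug subst_need_body liftn_liftn_0)
qed (auto intro: eval_ctx.intros)

abbreviation need_redex :: "ctx \<Rightarrow> ctx \<Rightarrow> dB \<Rightarrow> ctx \<Rightarrow> dB \<Rightarrow> dB" where
  "need_redex Au A1 b A2 v \<equiv> plug Au (App (plug A1 (Lam b)) (plug A2 v))"

abbreviation need_contractum :: "ctx \<Rightarrow> ctx \<Rightarrow> dB \<Rightarrow> ctx \<Rightarrow> dB \<Rightarrow> dB" where
  "need_contractum Au A1 b A2 v \<equiv> plug Au (plug A1 (plug (cliftn (binders A1) A2 0)
     (subst (liftn (binders A2) b 1) (liftn (binders A1) v (binders A2)) 0)))"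

lemma beta_need_need_redex:
  "need_shape Au A1 Ad \<Longrightarrow> eval_ctx E \<Longrightarrow> ans A2 \<Longrightarrow> is_value v \<Longrightarrow>
   beta_need (need_redex Au A1 (need_body Ad E) A2 v) (need_contractum Au A1 (need_body Ad E) A2 v)"
  unfolding need_shape_def by (blast intro: beta_needI)

lemma beta_needE:
  assumes "beta_need r r'"
  obtains Au A1 Ad E A2 v where
    "r = need_redex Au A1 (need_body Ad E) A2 v" "r' = need_contractum Au A1 (need_body Ad E) A2 v"
    "need_shape Au A1 Ad" "eval_ctx E" "ans A2" "is_value v"
  using assms by (cases rule: beta_need.cases) (auto simp: need_shape_def)

lemma beta_need_liftn:
  assumes "beta_need r r'"
  shows "beta_need (liftn n r k) (liftn n r' k)"
proof -
  from assms obtain Au A1 Ad E A2 v where r: "r = need_redex Au A1 (need_body Ad E) A2 v"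
    and r': "r' = need_contractum Au A1 (need_body Ad E) A2 v"
    and shape: "need_shape Au A1 Ad" and E: "eval_ctx E" and A2: "ans A2" and v: "is_value v"
    by (rule beta_needE)
  define K where "K = k + binders Au"
  define a1 where "a1 = binders A1"
  define a2 where "a2 = binders A2"
  define A2' where "A2' = cliftn n A2 K"
  define v' where "v' = liftn n v (K + a2)"
  define b' where "b' = liftn n (need_body Ad E) (K + a1 + 1)"
  have b': "b' = need_body (cliftn n Ad (K + a1 + 1)) (cliftn n E (K + a1 + 1 + binders Ad))"
    by (simp add: b'_def liftn_need_body)
  have "need_shape (cliftn n Au k) (cliftn n A1 K) (cliftn n Ad (K + a1 + 1))"
    using shape
    by (rule need_shape_same_shape[OF _ same_shape_cliftn same_shape_cliftn same_shape_cliftn])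
  moreover have "ans A2'"
    using A2 same_shape_cliftn unfolding A2'_def by (rule ans_same_shape)
  moreover have "is_value v'"
    using v by (auto simp: v'_def is_value_def)
  ultimately have "beta_need (need_redex (cliftn n Au k) (cliftn n A1 K) b' A2' v')
      (need_contractum (cliftn n Au k) (cliftn n A1 K) b' A2' v')"
    unfolding b' by (intro beta_need_need_redex eval_ctx_cliftn E)
  moreover have "liftn n r k = need_redex (cliftn n Au k) (cliftn n A1 K) b' A2' v'"
    by (simp add: r liftn_plug K_def A2'_def v'_def b'_def a1_def a2_def add.assoc)
  moreover have "liftn n r' k = need_contractum (cliftn n Au k) (cliftn n A1 K) b' A2' v'"
  proof -
    have "cliftn n (cliftn a1 A2 0) (K + a1) = cliftn a1 A2' 0"
      using cliftn_cliftn_comm[of 0 K n a1 A2] by (simp add: A2'_def)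
    with liftn_contractum[of n a2 "need_body Ad E" a1 v K] show ?thesis
      by (simp add: r' liftn_plug K_def A2'_def v'_def b'_def a1_def a2_def add.assoc)
  qed
  ultimately show ?thesis by simp
qed

lemma beta_need_subst:
  assumes "beta_need r r'"
  shows "beta_need (subst r s k) (subst r' s k)"
proof -
  from assms obtain Au A1 Ad E A2 v where r: "r = need_redex Au A1 (need_body Ad E) A2 v"
    and r': "r' = need_contractum Au A1 (need_body Ad E) A2 v"
    and shape: "need_shape Au A1 Ad" and E: "eval_ctx E" and A2: "ans A2" and v: "is_value v"
    by (rule beta_needE)
  define K where "K = k + binders Au"
  define a1 where "a1 = binders A1"
  define a2 where "a2 = binders A2"
  define sK where "sK = liftn (binders Au) s 0"
  define A2' where "A2' = csubst A2 sK K"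
  define v' where "v' = subst v (liftn a2 sK 0) (K + a2)"
  define b' where "b' = subst (need_body Ad E) (liftn (a1 + 1) sK 0) (K + a1 + 1)"
  have b': "b' = need_body (csubst Ad (liftn (a1 + 1) sK 0) (K + a1 + 1))
      (csubst E (liftn (binders Ad) (liftn (a1 + 1) sK 0) 0) (K + a1 + 1 + binders Ad))"
    by (simp add: b'_def subst_need_body)
  have "need_shape (csubst Au s k) (csubst A1 sK K) (csubst Ad (liftn (a1 + 1) sK 0) (K + a1 + 1))"
    using shape
    by (rule need_shape_same_shape[OF _ same_shape_csubst same_shape_csubst same_shape_csubst])
  moreover have "ans A2'"
    using A2 same_shape_csubst unfolding A2'_def by (rule ans_same_shape)
  moreover have "is_value v'"
    using v by (auto simp: v'_def is_value_def)
  ultimately have "beta_need (need_redex (csubst Au s k) (csubst A1 sK K) b' A2' v')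
      (need_contractum (csubst Au s k) (csubst A1 sK K) b' A2' v')"
    unfolding b' by (intro beta_need_need_redex eval_ctx_csubst E)
  moreover have "subst r s k = need_redex (csubst Au s k) (csubst A1 sK K) b' A2' v'"
    by (simp add: r subst_plug liftn_liftn_0 K_def sK_def A2'_def v'_def b'_def a1_def a2_def
        add.assoc)
  moreover have "subst r' s k = need_contractum (csubst Au s k) (csubst A1 sK K) b' A2' v'"
  proof -
    have "csubst (cliftn a1 A2 0) (liftn a1 sK 0) (K + a1) = cliftn a1 A2' 0"
      using csubst_cliftn[of 0 K a1 A2 sK] by (simp add: A2'_def)
    with subst_contractum[of a2 "need_body Ad E" a1 v sK K] show ?thesis
      by (simp add: r' subst_plug liftn_liftn_0 K_def sK_def A2'_def v'_def b'_def a1_def a2_def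
          add.assoc)
  qed
  ultimately show ?thesis by simp
qed

inductive tred :: "dB \<Rightarrow> dB \<Rightarrow> bool" where
  tred_Var: "tred (Var i) (Var i)"
| tred_Lam: "tred a b \<Longrightarrow> tred (Lam a) (Lam b)"
| tred_App: "tred a b \<Longrightarrow> tred c d \<Longrightarrow> tred (App a c) (App b d)"
| tred_beta_need: "beta_need e e2 \<Longrightarrow> tred e2 e' \<Longrightarrow> tred e e'"

lemma tred_refl: "tred t t"
  by (induction t) (simp_all add: tred.intros)

lemma red_imp_tred: "red e e' \<Longrightarrow> tred e e'"
  by (induction rule: red.induct) (auto intro: tred.intros tred_refl)

lemma tred_liftn: "tred e e' \<Longrightarrow> tred (liftn n e k) (liftn n e' k)"
  by (induction arbitrary: k rule: tred.induct) (auto intro: tred.intros beta_need_liftn)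

lemma tred_subst: "tred e e' \<Longrightarrow> tred s s' \<Longrightarrow> tred (subst e s k) (subst e' s' k)"
proof (induction arbitrary: s s' k rule: tred.induct)
  case (tred_Lam a b)
  then show ?case by (simp add: tred.tred_Lam tred_liftn)
qed (auto intro: tred.intros tred_refl beta_need_subst)

lemma tred_VarD: "tred e (Var i) \<Longrightarrow> beta_need\<^sup>*\<^sup>* e (Var i)"
  by (induction e "Var i" rule: tred.induct) auto

lemma tred_LamD: "tred e (Lam b) \<Longrightarrow> \<exists>a. beta_need\<^sup>*\<^sup>* e (Lam a) \<and> tred a b"
  by (induction e "Lam b" rule: tred.induct) (auto intro: converse_rtranclp_into_rtranclp)

lemma tred_AppD:
  "tred e (App b d) \<Longrightarrow> \<exists>a c. beta_need\<^sup>*\<^sup>* e (App a c) \<and> tred a b \<and> tred c d"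
  by (induction e "App b d" rule: tred.induct) (auto intro: converse_rtranclp_into_rtranclp)

abbreviation tred_ctx :: "ctx \<Rightarrow> ctx \<Rightarrow> bool" where
  "tred_ctx \<equiv> ctx_rel tred"

lemma tred_ctx_plug: "tred_ctx C0 C \<Longrightarrow> tred t0 t \<Longrightarrow> tred (plug C0 t0) (plug C t)"
  by (induction rule: ctx_rel.induct) (simp_all add: tred.intros)

lemma tred_ctx_cliftn: "tred_ctx C0 C \<Longrightarrow> tred_ctx (cliftn n C0 k) (cliftn n C k)"
  by (induction arbitrary: k rule: ctx_rel.induct) (simp_all add: ctx_rel.intros tred_liftn)

lemma tred_need_body:
  "tred_ctx Ad0 Ad \<Longrightarrow> tred_ctx E0 E \<Longrightarrow> tred (need_body Ad0 E0) (need_body Ad E)"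
  by (simp add: need_body_def tred_ctx_plug tred_refl ctx_rel_binders)

lemma ans_tred_ctx: "tred_ctx A0 A \<Longrightarrow> ans A \<Longrightarrow> ans A0"
  using ans_same_shape ctx_rel_same_shape by blast

lemma need_shape_tred_ctx:
  "need_shape Au A Ad \<Longrightarrow> tred_ctx Au0 Au \<Longrightarrow> tred_ctx A0 A \<Longrightarrow> tred_ctx Ad0 Ad \<Longrightarrow>
   need_shape Au0 A0 Ad0"
  by (simp add: need_shape_same_shape ctx_rel_same_shape)

lemma eval_ctx_comp: "eval_ctx F \<Longrightarrow> eval_ctx E \<Longrightarrow> eval_ctx (comp F E)"
proof (induction rule: eval_ctx.induct)
  case (ev_need Au A Ad E1 E2)
  then show ?case using eval_ctx.ev_need[of Au A Ad E1 "comp E2 E"] by simp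
qed (auto intro: eval_ctx.intros)

lemma ans_imp_eval_ctx: "ans A \<Longrightarrow> eval_ctx A"
  using eval_ctx.ev_ans[of A Hole] eval_ctx.ev_hole by simp

abbreviation std_steps :: "dB \<Rightarrow> dB \<Rightarrow> bool" where
  "std_steps \<equiv> std_step\<^sup>*\<^sup>*"

lemma std_step_plug: "std_step e e' \<Longrightarrow> eval_ctx F \<Longrightarrow> std_step (plug F e) (plug F e')"
  by (induction rule: std_step.induct) (metis eval_ctx_comp plug_comp std_step.intros)

lemma std_steps_plug: "std_steps e e' \<Longrightarrow> eval_ctx F \<Longrightarrow> std_steps (plug F e) (plug F e')"
  by (induction rule: rtranclp_induct) (auto intro: rtranclp.rtrancl_into_rtrancl std_step_plug)

lemma beta_need_imp_std_steps: "beta_need\<^sup>*\<^sup>* e e' \<Longrightarrow> std_steps e e'"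
  by (rule mono_rtranclp[rule_format, of beta_need std_step])
    (metis ev_hole plug.simps(1) std_step.intros)

lemma comp_eq_comp_CLamD:
  "comp C D = comp A (CLam B) \<Longrightarrow>
   (\<exists>C'. C = comp A (CLam C') \<and> B = comp C' D) \<or> (\<exists>D'. A = comp C D' \<and> D = comp D' (CLam B))"
proof (induction C arbitrary: A)
  case (CLam C)
  then show ?case by (cases A) (auto intro: exI[of _ C])
next
  case (CAppL C t)
  then show ?case by (cases A) auto
next
  case (CAppR t C)
  then show ?case by (cases A) auto
qed auto

lemma ans_comp: "ans A \<Longrightarrow> ans B \<Longrightarrow> ans (comp A B)"
proof (induction rule: ans.induct)
  case (ans_app A1 A2 e)
  then show ?case using ans.ans_app[of A1 "comp A2 B" e] by simp
qed simp

lemma ans_insert: "ans (comp C D) \<Longrightarrow> ans X \<Longrightarrow> ans (comp C (comp X D))"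
proof (induction "comp C D" arbitrary: C D rule: ans.induct)
  case ans_hole
  then show ?case by (cases C) auto
next
  case (ans_app A1 A2 e)
  show ?case
  proof (cases C)
    case Hole
    with ans_app.prems ans_app.hyps(1,3,5) show ?thesis by (auto intro: ans_comp ans.ans_app)
  next
    case (CAppL C' e')
    with ans_app.hyps(5) have "comp C' D = comp A1 (CLam A2)" "e' = e" by auto
    then consider C'' where "C' = comp A1 (CLam C'')" "A2 = comp C'' D"
      | D' where "A1 = comp C' D'" "D = comp D' (CLam A2)"
      using comp_eq_comp_CLamD by blast
    then show ?thesis
    proof cases
      case 1
      then show ?thesis using ans_app CAppL \<open>e' = e\<close>
        ans.ans_app[of A1 "comp C'' (comp X D)" e] by simp
    next
      case 2
      then show ?thesis using ans_app CAppL \<open>e' = e\<close>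
        ans.ans_app[of "comp C' (comp X D')" A2 e] by simp
    qed
  qed (use ans_app.hyps(5) in auto)
qed

lemma ans_comp_need: "ans (comp Au Ad) \<Longrightarrow> ans A \<Longrightarrow> ans (comp Au (CAppL (comp A (CLam Ad)) g))"
  using ans_insert[of Au Ad "CAppL (comp A (CLam Hole)) g"] ans.ans_app[of A Hole g] ans.ans_hole
  by simp

lemma tred_ans_plug:
  "ans A \<Longrightarrow> tred e (plug A s) \<Longrightarrow>
   \<exists>A0 s0. std_steps e (plug A0 s0) \<and> tred_ctx A0 A \<and> tred s0 s"
proof (induction arbitrary: e s rule: ans.induct)
  case ans_hole
  then show ?case by (intro exI[of _ Hole] exI[of _ e]) (auto intro: ctx_rel.intros)
next
  case (ans_app A1 A2 c)
  from ans_app.prems obtain a c0 where e: "beta_need\<^sup>*\<^sup>* e (App a c0)"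
    and a: "tred a (plug A1 (Lam (plug A2 s)))" and c0: "tred c0 c"
    using tred_AppD by fastforce
  from ans_app.IH(1)[OF a] obtain A10 h where a1: "std_steps a (plug A10 h)"
    and A10: "tred_ctx A10 A1" and h: "tred h (Lam (plug A2 s))" by blast
  from tred_LamD[OF h] obtain u where h1: "beta_need\<^sup>*\<^sup>* h (Lam u)" and u: "tred u (plug A2 s)"
    by blast
  from ans_app.IH(2)[OF u] obtain A20 s0 where u1: "std_steps u (plug A20 s0)"
    and A20: "tred_ctx A20 A2" and s0: "tred s0 s" by blast
  have "ans A10" using A10 ans_app.hyps(1) by (rule ans_tred_ctx)
  then have ev: "eval_ctx (CAppL A10 c0)" "eval_ctx (CAppL (comp A10 (CLam Hole)) c0)"
    by (auto intro: ev_app ans_imp_eval_ctx ans.intros)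
  have "std_steps e (App a c0)" using e by (rule beta_need_imp_std_steps)
  also have "std_steps \<dots> (App (plug A10 h) c0)"
    using std_steps_plug[OF a1, of "CAppL Hole c0"] by (simp add: eval_ctx.intros)
  also have "std_steps \<dots> (App (plug A10 (Lam u)) c0)"
    using std_steps_plug[OF beta_need_imp_std_steps[OF h1] ev(1)] by simp
  also have "std_steps \<dots> (App (plug A10 (Lam (plug A20 s0))) c0)"
    using std_steps_plug[OF u1 ev(2)] by simp
  finally show ?case using A10 A20 c0 s0
    by (intro exI[of _ "CAppL (comp A10 (CLam A20)) c0"] exI[of _ s0])
      (auto intro!: ctx_rel.intros ctx_rel_comp)
qed

definition std_liftable :: "ctx \<Rightarrow> bool" where
  "std_liftable E \<longleftrightarrow> (\<forall>e t. tred e (plug E t) \<longrightarrow>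
     (\<exists>E0 t0. std_steps e (plug E0 t0) \<and> eval_ctx E0 \<and> tred_ctx E0 E \<and> tred t0 t))"

lemma std_liftableD:
  assumes "std_liftable E" and "tred e (plug E t)"
  obtains E0 t0 where "std_steps e (plug E0 t0)" "eval_ctx E0" "tred_ctx E0 E" "tred t0 t"
  using assms unfolding std_liftable_def by blast

lemma std_liftable_Hole: "std_liftable Hole"
  unfolding std_liftable_def by (auto intro!: exI[of _ Hole] intro: ctx_rel.intros eval_ctx.intros)

lemma std_liftable_CAppL:
  assumes E: "std_liftable E"
  shows "std_liftable (CAppL E c)"
  unfolding std_liftable_def
proof (intro allI impI)
  fix e t assume "tred e (plug (CAppL E c) t)"
  then obtain a c0 where e: "beta_need\<^sup>*\<^sup>* e (App a c0)" and a: "tred a (plug E t)"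
    and c0: "tred c0 c"
    using tred_AppD by fastforce
  from E a obtain E0 t0
    where a1: "std_steps a (plug E0 t0)" "eval_ctx E0" "tred_ctx E0 E" "tred t0 t"
    by (rule std_liftableD)
  have "std_steps e (App (plug E0 t0) c0)"
    using beta_need_imp_std_steps[OF e] std_steps_plug[OF a1(1), of "CAppL Hole c0"]
    by (simp add: eval_ctx.intros)
  with a1 c0 show "\<exists>E0 t0. std_steps e (plug E0 t0) \<and> eval_ctx E0 \<and>
      tred_ctx E0 (CAppL E c) \<and> tred t0 t"
    by (intro exI[of _ "CAppL E0 c0"] exI[of _ t0]) (auto intro: ctx_rel.intros eval_ctx.intros)
qed

lemma std_liftable_ans_comp:
  assumes A: "ans A" and E: "std_liftable E"
  shows "std_liftable (comp A E)"
  unfolding std_liftable_def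
proof (intro allI impI)
  fix e t assume "tred e (plug (comp A E) t)"
  with A obtain A0 s0 where e: "std_steps e (plug A0 s0)" "tred_ctx A0 A" "tred s0 (plug E t)"
    using tred_ans_plug by fastforce
  from E e(3) obtain E0 t0
    where s: "std_steps s0 (plug E0 t0)" "eval_ctx E0" "tred_ctx E0 E" "tred t0 t"
    by (rule std_liftableD)
  have A0: "ans A0" using e(2) A by (rule ans_tred_ctx)
  have "std_steps e (plug (comp A0 E0) t0)"
    using e(1) std_steps_plug[OF s(1) ans_imp_eval_ctx[OF A0]] by simp
  moreover have "eval_ctx (comp A0 E0)" using A0 s(2) by (rule eval_ctx.ev_ans)
  ultimately show "\<exists>E0 t0. std_steps e (plug E0 t0) \<and> eval_ctx E0 \<and>
      tred_ctx E0 (comp A E) \<and> tred t0 t"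
    using s e by (blast intro: ctx_rel_comp)
qed

text \<open>The variable demanded by the body is in evaluation position below the answer context
  Au[A[\<lambda>x.Ad] g], so standard steps can expose the whole frame before touching the argument g.\<close>

lemma tred_need_frame:
  assumes shape: "need_shape Au A Ad" and E1: "std_liftable E1"
    and e: "tred e (plug Au (App (plug A (Lam (need_body Ad E1))) g))"
  obtains Au0 A0 Ad0 E10 g0 where
    "std_steps e (plug Au0 (App (plug A0 (Lam (need_body Ad0 E10))) g0))"
    "tred_ctx Au0 Au" "tred_ctx A0 A" "tred_ctx Ad0 Ad" "tred_ctx E10 E1" "eval_ctx E10" "tred g0 g"
proof -
  define n where "n = binders Ad + binders E1"
  define Q where "Q = comp Au (CAppL (comp A (CLam Ad)) g)"
  have ansQ: "ans Q" using shape unfolding Q_def need_shape_def by (blast intro: ans_comp_need)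
  have "tred e (plug Q (plug E1 (Var n)))" using e by (simp add: Q_def need_body_def n_def)
  then obtain Q0 s0 where e1: "std_steps e (plug Q0 s0)" and Q0: "tred_ctx Q0 Q"
    and s0: "tred s0 (plug E1 (Var n))"
    using tred_ans_plug[OF ansQ] by blast
  from E1 s0 obtain E10 u where s1: "std_steps s0 (plug E10 u)" and evE10: "eval_ctx E10"
    and E10: "tred_ctx E10 E1" and u: "tred u (Var n)" by (rule std_liftableD)
  have evQ0: "eval_ctx Q0" using Q0 ansQ by (blast intro: ans_imp_eval_ctx ans_tred_ctx)
  have "std_steps e (plug Q0 (plug E10 u))" using e1 std_steps_plug[OF s1 evQ0] by simp
  also have "std_steps \<dots> (plug Q0 (plug E10 (Var n)))"
    using std_steps_plug[OF beta_need_imp_std_steps[OF tred_VarD[OF u]] eval_ctx_comp[OF evQ0 evE10]]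
    by simp
  finally have e2: "std_steps e (plug Q0 (plug E10 (Var n)))" .
  from Q0[unfolded Q_def] obtain Au0 X where Q0eq: "Q0 = comp Au0 X" and Au0: "tred_ctx Au0 Au"
    and X: "tred_ctx X (CAppL (comp A (CLam Ad)) g)"
    by (rule ctx_rel_compE)
  from X obtain Y g0 where Xeq: "X = CAppL Y g0" and Y: "tred_ctx Y (comp A (CLam Ad))"
    and g0: "tred g0 g"
    by (auto elim: ctx_rel_CAppLE)
  from Y obtain A0 Z where Yeq: "Y = comp A0 Z" and A0: "tred_ctx A0 A" and Z: "tred_ctx Z (CLam Ad)"
    by (rule ctx_rel_compE)
  from Z obtain Ad0 where Zeq: "Z = CLam Ad0" and Ad0: "tred_ctx Ad0 Ad" by (auto elim: ctx_rel_CLamE)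
  have "n = binders Ad0 + binders E10" using Ad0 E10 by (simp add: n_def ctx_rel_binders)
  then have "plug Q0 (plug E10 (Var n)) = plug Au0 (App (plug A0 (Lam (need_body Ad0 E10))) g0)"
    by (simp add: Q0eq Xeq Yeq Zeq need_body_def)
  with e2 Au0 A0 Ad0 E10 evE10 g0 show ?thesis by (intro that) simp_all
qed

lemma std_liftable_need:
  assumes shape: "need_shape Au A Ad" and E1: "std_liftable E1" and E2: "std_liftable E2"
  shows "std_liftable (comp Au (CAppR (plug A (Lam (need_body Ad E1))) E2))"
  unfolding std_liftable_def
proof (intro allI impI)
  fix e t assume "tred e (plug (comp Au (CAppR (plug A (Lam (need_body Ad E1))) E2)) t)"
  then have "tred e (plug Au (App (plug A (Lam (need_body Ad E1))) (plug E2 t)))" by simp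
  with shape E1 obtain Au0 A0 Ad0 E10 g0 where
    e1: "std_steps e (plug Au0 (App (plug A0 (Lam (need_body Ad0 E10))) g0))"
    and rel: "tred_ctx Au0 Au" "tred_ctx A0 A" "tred_ctx Ad0 Ad" "tred_ctx E10 E1"
    and evE10: "eval_ctx E10" and g0: "tred g0 (plug E2 t)"
    by (rule tred_need_frame)
  from E2 g0 obtain E20 t0 where
    g1: "std_steps g0 (plug E20 t0)" "eval_ctx E20" "tred_ctx E20 E2" "tred t0 t"
    by (rule std_liftableD)
  define F0 where "F0 = comp Au0 (CAppR (plug A0 (Lam (need_body Ad0 E10))) E20)"
  have shape0: "need_shape Au0 A0 Ad0" using shape rel(1-3) by (rule need_shape_tred_ctx)
  have "eval_ctx F0" unfolding F0_def using shape0 evE10 g1(2) by (rule eval_ctx_need)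
  moreover have "std_steps e (plug F0 t0)"
    using e1 std_steps_plug[OF g1(1) eval_ctx_need[OF shape0 evE10 ev_hole]] by (simp add: F0_def)
  moreover have "tred_ctx F0 (comp Au (CAppR (plug A (Lam (need_body Ad E1))) E2))"
    unfolding F0_def using rel g1(3)
    by (intro ctx_rel_comp ctx_rel_CAppR tred_ctx_plug tred_Lam tred_need_body) auto
  ultimately show "\<exists>F0 t0. std_steps e (plug F0 t0) \<and> eval_ctx F0 \<and>
      tred_ctx F0 (comp Au (CAppR (plug A (Lam (need_body Ad E1))) E2)) \<and> tred t0 t"
    using g1(4) by blast
qed

lemma eval_ctx_std_liftable: "eval_ctx E \<Longrightarrow> std_liftable E"
  by (induction rule: eval_ctx.induct)
    (auto simp: need_shape_def
      intro: std_liftable_Hole std_liftable_CAppL std_liftable_ans_comp std_liftable_need)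

lemma tred_beta_need:
  assumes t: "tred t r" and r: "beta_need r r'"
  obtains t2 t3 where "std_steps t t2" "beta_need t2 t3" "tred t3 r'"
proof -
  from r obtain Au A1 Ad E A2 v where r_eq: "r = need_redex Au A1 (need_body Ad E) A2 v"
    and r'_eq: "r' = need_contractum Au A1 (need_body Ad E) A2 v"
    and shape: "need_shape Au A1 Ad" and E: "eval_ctx E" and A2: "ans A2" and v: "is_value v"
    by (rule beta_needE)
  from v obtain b where vb: "v = Lam b" unfolding is_value_def by blast
  from shape eval_ctx_std_liftable[OF E] t[unfolded r_eq] obtain Au0 A10 Ad0 E0 g0 where
    e1: "std_steps t (plug Au0 (App (plug A10 (Lam (need_body Ad0 E0))) g0))"
    and rel: "tred_ctx Au0 Au" "tred_ctx A10 A1" "tred_ctx Ad0 Ad" "tred_ctx E0 E"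
    and evE0: "eval_ctx E0" and g0: "tred g0 (plug A2 v)"
    by (rule tred_need_frame)
  from tred_ans_plug[OF A2 g0] obtain A20 w
    where g1: "std_steps g0 (plug A20 w)" "tred_ctx A20 A2" "tred w v" by blast
  from g1(3) vb obtain b0 where w1: "beta_need\<^sup>*\<^sup>* w (Lam b0)" "tred b0 b"
    using tred_LamD by blast
  have shape0: "need_shape Au0 A10 Ad0" using shape rel(1-3) by (rule need_shape_tred_ctx)
  have ansA20: "ans A20" using g1(2) A2 by (rule ans_tred_ctx)
  let ?F0 = "plug A10 (Lam (need_body Ad0 E0))"
  have "std_steps t (plug Au0 (App ?F0 g0))" by (fact e1)
  also have "std_steps \<dots> (plug Au0 (App ?F0 (plug A20 w)))"
    using std_steps_plug[OF g1(1) eval_ctx_need[OF shape0 evE0 ev_hole]] by simp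
  also have "std_steps \<dots> (plug Au0 (App ?F0 (plug A20 (Lam b0))))"
    using std_steps_plug[OF beta_need_imp_std_steps[OF w1(1)]
        eval_ctx_need[OF shape0 evE0 ans_imp_eval_ctx[OF ansA20]]]
    by simp
  finally have t2: "std_steps t (need_redex Au0 A10 (need_body Ad0 E0) A20 (Lam b0))" .
  have "beta_need (need_redex Au0 A10 (need_body Ad0 E0) A20 (Lam b0))
      (need_contractum Au0 A10 (need_body Ad0 E0) A20 (Lam b0))"
    using shape0 evE0 ansA20 by (rule beta_need_need_redex) (simp add: is_value_def)
  moreover have binders_eq: "binders A10 = binders A1" "binders A20 = binders A2"
    using rel(2) g1(2) by (simp_all add: ctx_rel_binders)
  have "tred (need_contractum Au0 A10 (need_body Ad0 E0) A20 (Lam b0)) r'"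
    unfolding r'_eq vb binders_eq
    by (intro tred_ctx_plug tred_ctx_cliftn tred_subst tred_liftn tred_need_body tred_Lam rel g1 w1)
  ultimately show ?thesis using t2 that by blast
qed

lemma tred_std_step:
  assumes "tred e e'" and "std_step e' e''"
  obtains e2 where "std_steps e e2" "tred e2 e''"
proof -
  from assms(2) obtain E r r' where eq: "e' = plug E r" "e'' = plug E r'"
    and E: "eval_ctx E" and r: "beta_need r r'"
    by (cases rule: std_step.cases) auto
  from eval_ctx_std_liftable[OF E] assms(1)[unfolded eq(1)] obtain E0 t0
    where a: "std_steps e (plug E0 t0)" "eval_ctx E0" "tred_ctx E0 E" "tred t0 r"
    by (rule std_liftableD)
  from a(4) r obtain t2 t3 where b: "std_steps t0 t2" "beta_need t2 t3" "tred t3 r'"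
    by (rule tred_beta_need)
  have "std_steps e (plug E0 t2)" using a(1) std_steps_plug[OF b(1) a(2)] by simp
  then have "std_steps e (plug E0 t3)"
    using std_step.intros[OF a(2) b(2)] by (rule rtranclp.rtrancl_into_rtrancl)
  moreover have "tred (plug E0 t3) e''" using eq(2) tred_ctx_plug[OF a(3) b(3)] by simp
  ultimately show ?thesis by (rule that)
qed

text \<open>std_red e e' records only the endpoints of a standard reduction sequence; its rules
  mirror those of std_seqs.\<close>

inductive std_red :: "dB \<Rightarrow> dB \<Rightarrow> bool" where
  std_red_Var: "std_red (Var x) (Var x)"
| std_red_Lam: "std_red a b \<Longrightarrow> std_red (Lam a) (Lam b)"
| std_red_App: "std_red a a' \<Longrightarrow> std_red b b' \<Longrightarrow> std_red (App a b) (App a' b')"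
| std_red_step: "std_step e e1 \<Longrightarrow> std_red e1 e' \<Longrightarrow> std_red e e'"

lemma std_red_refl: "std_red t t"
  by (induction t) (simp_all add: std_red.intros)

lemma std_steps_std_red: "std_steps e e1 \<Longrightarrow> std_red e1 e' \<Longrightarrow> std_red e e'"
  by (induction rule: converse_rtranclp_induct) (auto intro: std_red_step)

lemma tred_std_red: "std_red e' e'' \<Longrightarrow> tred e e' \<Longrightarrow> std_red e e''"
proof (induction arbitrary: e rule: std_red.induct)
  case (std_red_Var x)
  then show ?case
    using std_steps_std_red beta_need_imp_std_steps tred_VarD std_red.std_red_Var by blast
next
  case (std_red_Lam a b)
  then show ?case
    using std_steps_std_red beta_need_imp_std_steps tred_LamD std_red.std_red_Lam by meson
next
  case (std_red_App a a' b b')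
  then show ?case
    using std_steps_std_red beta_need_imp_std_steps tred_AppD std_red.std_red_App by meson
next
  case (std_red_step e1 e2 e')
  from std_red_step.prems std_red_step.hyps(1) obtain e3 where "std_steps e e3" "tred e3 e2"
    by (rule tred_std_step)
  with std_red_step.IH show ?case using std_steps_std_red by blast
qed

lemma red_star_imp_std_red: "red_star e e' \<Longrightarrow> std_red e e'"
  by (induction rule: converse_rtranclp_induct)
    (auto intro: std_red_refl tred_std_red red_imp_tred)

lemma std_seqs_nonempty: "es \<in> std_seqs \<Longrightarrow> es \<noteq> []"
  by (induction rule: std_seqs.induct) auto

lemma hd_last_app_seq:
  assumes "es \<noteq> []" "fs \<noteq> []"
  shows "hd (map (\<lambda>e. App e (hd fs)) es @ map (App (last es)) (tl fs)) = App (hd es) (hd fs)"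
    and "last (map (\<lambda>e. App e (hd fs)) es @ map (App (last es)) (tl fs)) = App (last es) (last fs)"
proof -
  show "hd (map (\<lambda>e. App e (hd fs)) es @ map (App (last es)) (tl fs)) = App (hd es) (hd fs)"
    using assms by (simp add: hd_map)
  show "last (map (\<lambda>e. App e (hd fs)) es @ map (App (last es)) (tl fs)) = App (last es) (last fs)"
    using assms by (cases fs) (simp_all add: last_map last_append)
qed

lemma std_red_imp_std_seq: "std_red e e' \<Longrightarrow> \<exists>es. es \<in> std_seqs \<and> hd es = e \<and> last es = e'"
proof (induction rule: std_red.induct)
  case (std_red_Var x)
  then show ?case using std_seqs.sr_var by force
next
  case (std_red_Lam a b)
  then obtain es where "es \<in> std_seqs" "hd es = a" "last es = b" by blast
  with std_seqs_nonempty show ?case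
    by (intro exI[of _ "map Lam es"]) (simp add: std_seqs.sr_lam hd_map last_map)
next
  case (std_red_App a a' b b')
  then obtain es fs where es: "es \<in> std_seqs" "hd es = a" "last es = a'"
    and fs: "fs \<in> std_seqs" "hd fs = b" "last fs = b'" by blast
  with hd_last_app_seq[OF std_seqs_nonempty[OF es(1)] std_seqs_nonempty[OF fs(1)]]
    std_seqs.sr_app[OF es(1) fs(1)] show ?case by blast
next
  case (std_red_step e e1 e')
  then obtain es where "es \<in> std_seqs" "hd es = e1" "last es = e'" by blast
  with std_red_step.hyps(1) std_seqs_nonempty show ?case
    by (intro exI[of _ "e # es"]) (simp add: std_seqs.sr_step)
qed

lemma red_plug: "red e e' \<Longrightarrow> red (plug C e) (plug C e')"
  by (induction C) (auto intro: red.intros)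

lemma red_star_plug: "red_star e e' \<Longrightarrow> red_star (plug C e) (plug C e')"
  by (induction rule: rtranclp_induct) (auto intro: rtranclp.rtrancl_into_rtrancl red_plug)

lemma std_step_imp_red: "std_step e e' \<Longrightarrow> red e e'"
  by (induction rule: std_step.induct) (auto intro: red_plug red.red_beta)

lemma std_seq_red_star: "es \<in> std_seqs \<Longrightarrow> red_star (hd es) (last es)"
proof (induction rule: std_seqs.induct)
  case (sr_lam es)
  then show ?case
    using std_seqs_nonempty red_star_plug[of _ _ "CLam Hole"] by (simp add: hd_map last_map)
next
  case (sr_step e0 es)
  then show ?case using std_seqs_nonempty std_step_imp_red
    by (metis converse_rtranclp_into_rtranclp list.sel(1) last_ConsR)
next
  case (sr_app es fs)
  have "red_star (App (hd es) (hd fs)) (App (last es) (last fs))"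
    using red_star_plug[OF sr_app.IH(1), of "CAppL Hole (hd fs)"]
      red_star_plug[OF sr_app.IH(2), of "CAppR (last es) Hole"]
    by simp
  with hd_last_app_seq[OF sr_app.hyps[THEN std_seqs_nonempty]] show ?case by simp
qed simp

theorem lemma3:
  fixes e e' :: dB
  shows "red_star e e' \<longleftrightarrow> (\<exists>es. es \<in> std_seqs \<and> hd es = e \<and> last es = e')"
  using red_star_imp_std_red std_red_imp_std_seq std_seq_red_star by blast

end
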